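(* Let $X$ be a Polish space, $G$ a Lie group, $\nu$ a left-invariant Haar measure on $G$, and let $G$ act on $X\times G$ by $g.(x,h)=(x,gh)$. Let $Z\subset X\times G$ be a non-empty open set and $m$ a Borel probability measure on $Z$. Let $p_1:X\times G\to X$ be the projection, $m_1=(p_1)_*m$, and for $x\in p_1(Z)$ write $Z_x=\{x\}\times U_x$ with $U_x\subset G$ open. Let $(m_x)_{x\in p_1(Z)}$ be a system of conditional measures, i.e. each $m_x$ is a Borel probability measure on $U_x$, and for every Borel $B\subset Z$ the function $x\mapsto m_x(\{h:(x,h)\in B\})$ is $m_1$-measurable and $m(B)=\int m_x(\{h:(x,h)\in B\})\,dm_1(x)$. Assume that $m$ is invariant: for every measurable $W\subset Z$ and $g\in G$ with $g.W\subset Z$, $m(g.W)=m(W)$. Then for $m_1$-almost every $x$, the open set $U_x$ has finite Haar measure and $$ m_x=\frac{1}{\nu(U_x)}\,\nu|_{U_x}.$$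
   Context: A Polish space is a topological space homeomorphic to a separable complete metric space. *)

theory Defs
  imports "HOL-Analysis.Analysis" "HOL-Probability.Probability_Measure"
begin

text \<open>A Lie group is rendered as a (Hausdorff, second countable) topological group
  (written additively, not necessarily commutative) which is locally Euclidean:
  every point has an open neighbourhood homeomorphic to an open subset of some R^n.
  By Gleason--Montgomery--Zippin such a group carries a unique Lie group structure.\<close>
definition locally_euclidean_group :: "'g::topological_group_add itself \<Rightarrow> bool" where
  "locally_euclidean_group _ \<longleftrightarrow>
     (\<forall>g::'g. \<exists>U n V. open U \<and> g \<in> U \<and> openin (Euclidean_space n) V \<and>
        (top_of_set U) homeomorphic_space (subtopology (Euclidean_space n) V))"

definition left_haar_measure :: "'g::topological_group_add measure \<Rightarrow> bool" where
  "left_haar_measure \<nu> \<longleftrightarrow>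
     sets \<nu> = sets borel \<and>
     (\<forall>K. compact K \<longrightarrow> emeasure \<nu> K < \<infinity>) \<and>
     (\<forall>U. open U \<and> U \<noteq> {} \<longrightarrow> emeasure \<nu> U > 0) \<and>
     (\<forall>g A. A \<in> sets borel \<longrightarrow> emeasure \<nu> ((\<lambda>h. g + h) ` A) = emeasure \<nu> A)"

definition act :: "'g::group_add \<Rightarrow> 'x \<times> 'g \<Rightarrow> 'x \<times> 'g" where
  "act g p = (fst p, g + snd p)"

definition fibre :: "('x \<times> 'g) set \<Rightarrow> 'x \<Rightarrow> 'g set" where
  "fibre Z x = {h. (x, h) \<in> Z}"

end

theory Submission
  imports Defs
begin

text \<open>
  For Borel sets \<open>A\<close> put \<open>\<rho>\<^sub>A(h) = \<nu>(A h\<^sup>-\<^sup>1)\<close>. Fubini and left invariance give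
  \<open>\<integral>\<^sub>C \<rho>\<^sub>A d\<nu> = \<nu>(C\<^sup>-\<^sup>1) \<nu>(A)\<close>; the invariance of \<open>m\<close>, pushed through the disintegration,
  gives the same identity with \<open>m\<^sub>x\<close> in place of \<open>\<nu>\<close> (and \<open>m\<^sub>x(A)\<close> in place of \<open>\<nu>(A)\<close>)
  for \<open>m\<^sub>1\<close>-almost every \<open>x\<close>, simultaneously for all \<open>A\<close>, \<open>C\<close> in a countable
  intersection-closed basis of relatively compact open sets with closures inside \<open>U\<^sub>x\<close>.
  Fixing one such nonempty \<open>A\<close>, the measures \<open>\<rho>\<^sub>A m\<^sub>x\<close> and \<open>(m\<^sub>x(A)/\<nu>(A)) \<rho>\<^sub>A \<nu>\<close> on \<open>U\<^sub>x\<close>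
  then agree on a generating \<open>\<inter>\<close>-stable family, hence everywhere; since \<open>0 < \<rho>\<^sub>A < \<infinity>\<close>,
  \<open>m\<^sub>x\<close> is a constant multiple of \<open>\<nu>\<close> on \<open>U\<^sub>x\<close>, and \<open>m\<^sub>x(U\<^sub>x) = 1\<close> fixes the constant.
\<close>

section \<open>Bases of relatively compact open sets\<close>

lemma Hausdorff_space_euclidean_t2: "Hausdorff_space (euclidean :: 'a::t2_space topology)"
  unfolding Hausdorff_space_def disjnt_def by (auto dest!: hausdorff)

lemma compact_closure_if_subset_compact: "closure A \<subseteq> K \<Longrightarrow> compact K \<Longrightarrow> compact (closure A)"
  by (metis closed_Int_compact closed_closure inf.absorb_iff1)

lemma locally_compact_space_if_locally_euclidean_group:
  assumes "locally_euclidean_group TYPE('g::topological_group_add)"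
  shows "locally_compact_space (euclidean :: 'g topology)"
proof -
  have "\<exists>V K. open V \<and> compact K \<and> g \<in> V \<and> V \<subseteq> K" for g :: 'g
  proof -
    obtain U n V where U: "open U" "g \<in> U" and V: "openin (Euclidean_space n) V"
      and hom: "top_of_set U homeomorphic_space subtopology (Euclidean_space n) V"
      using assms unfolding locally_euclidean_group_def by blast
    have "locally_compact_space (subtopology (Euclidean_space n) V)"
      using V Hausdorff_Euclidean_space locally_compact_Euclidean_space
      by (intro locally_compact_space_open_subset) auto
    then have "locally_compact_space (top_of_set U)"
      using hom homeomorphic_locally_compact_space by blast
    then obtain V' K where "openin (top_of_set U) V'" "compactin (top_of_set U) K" "g \<in> V'" "V' \<subseteq> K"
      using U unfolding locally_compact_space_def by force
    then show ?thesis
      using U by (metis compactin_euclidean_iff compactin_subtopology openin_open_trans)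
  qed
  then show ?thesis unfolding locally_compact_space_def by auto
qed

definition compact_closure_basis :: "'a::topological_space set set \<Rightarrow> bool" where
  "compact_closure_basis \<B> \<longleftrightarrow> countable \<B> \<and> (\<forall>b\<in>\<B>. open b \<and> compact (closure b)) \<and>
     (\<forall>b\<in>\<B>. \<forall>c\<in>\<B>. b \<inter> c \<in> \<B>) \<and> (\<forall>S p. open S \<and> p \<in> S \<longrightarrow> (\<exists>b\<in>\<B>. p \<in> b \<and> closure b \<subseteq> S))"

lemma compact_closure_basisD:
  assumes "compact_closure_basis \<B>"
  shows "countable \<B>" "\<And>b. b \<in> \<B> \<Longrightarrow> open b" "\<And>b. b \<in> \<B> \<Longrightarrow> compact (closure b)"
    "\<And>b c. b \<in> \<B> \<Longrightarrow> c \<in> \<B> \<Longrightarrow> b \<inter> c \<in> \<B>"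
    "\<And>S p. open S \<Longrightarrow> p \<in> S \<Longrightarrow> \<exists>b\<in>\<B>. p \<in> b \<and> closure b \<subseteq> S"
  using assms unfolding compact_closure_basis_def by simp_all

lemma Union_compact_closure_basis:
  assumes "compact_closure_basis \<B>" "open S"
  shows "\<Union>{b\<in>\<B>. closure b \<subseteq> S} = S"
  using compact_closure_basisD(5)[OF assms] closure_subset by fast

lemma ex_basis_element_compact_closure:
  fixes B :: "'a::t2_space set set"
  assumes "locally_compact_space (euclidean :: 'a topology)"
    and B: "topological_basis B" and "open S" "p \<in> S"
  shows "\<exists>b\<in>B. p \<in> b \<and> compact (closure b) \<and> closure b \<subseteq> S"
proof -
  have "neighbourhood_base_of (\<lambda>C. compactin euclidean C \<and> closedin euclidean C) (euclidean :: 'a topology)"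
    using assms(1) Hausdorff_space_euclidean_t2 locally_compact_space_neighbourhood_base_closedin by blast
  from this[unfolded neighbourhood_base_of, rule_format, of S p]
  obtain V K where "openin euclidean V" "compactin euclidean K" "closedin euclidean K"
      "p \<in> V" "V \<subseteq> K" "K \<subseteq> S"
    using assms(3,4) by auto
  then have "open V" "compact K" "closed K" "p \<in> V" "V \<subseteq> K" "K \<subseteq> S"
    by simp_all
  moreover obtain b where "b \<in> B" "p \<in> b" "b \<subseteq> V"
    using topological_basisE[OF B \<open>open V\<close> \<open>p \<in> V\<close>] by blast
  moreover have "closure b \<subseteq> K"
    using \<open>b \<subseteq> V\<close> \<open>V \<subseteq> K\<close> \<open>closed K\<close> by (meson closure_minimal order_trans)
  ultimately show ?thesis
    using compact_closure_if_subset_compact by blast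
qed

lemma ex_compact_closure_basis:
  assumes "locally_compact_space (euclidean :: 'a::{t2_space, second_countable_topology} topology)"
  obtains \<B> :: "'a::{t2_space, second_countable_topology} set set" where "compact_closure_basis \<B>"
proof -
  obtain B :: "'a set set" where B: "countable B" "topological_basis B"
    using ex_countable_basis by blast
  define B0 where "B0 = {b\<in>B. compact (closure b)}"
  define \<B> where "\<B> = Inter ` {F. finite F \<and> F \<noteq> {} \<and> F \<subseteq> B0}"
  have "compact_closure_basis \<B>"
    unfolding compact_closure_basis_def
  proof (intro conjI ballI allI impI)
    have "countable {F. finite F \<and> F \<subseteq> B0}"
      using B(1) unfolding B0_def by (intro countable_Collect_finite_subset) simp
    then show "countable \<B>"
      unfolding \<B>_def by (rule countable_image[OF countable_subset, rotated]) blast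
  next
    fix b assume "b \<in> \<B>"
    then obtain F where F: "finite F" "F \<noteq> {}" "F \<subseteq> B0" "b = \<Inter>F"
      unfolding \<B>_def by blast
    show "open b"
      unfolding F(4) using F(1,3) topological_basis_open[OF B(2)] unfolding B0_def
      by (intro open_Inter) auto
    obtain c where "c \<in> F" using F(2) by blast
    then have "closure b \<subseteq> closure c" using F(4) by (intro closure_mono) blast
    then show "compact (closure b)"
      using \<open>c \<in> F\<close> F(3) unfolding B0_def by (auto intro: compact_closure_if_subset_compact)
  next
    fix b c assume "b \<in> \<B>" "c \<in> \<B>"
    then obtain F G where "finite F" "F \<noteq> {}" "F \<subseteq> B0" "b = \<Inter>F"
      and "finite G" "G \<noteq> {}" "G \<subseteq> B0" "c = \<Inter>G"
      unfolding \<B>_def by blast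
    then show "b \<inter> c \<in> \<B>"
      unfolding \<B>_def by (intro image_eqI[of _ _ "F \<union> G"]) auto
  next
    fix S :: "'a set" and p :: 'a
    assume "open S \<and> p \<in> S"
    then obtain b where "b \<in> B0" "p \<in> b" "closure b \<subseteq> S"
      using ex_basis_element_compact_closure[OF assms B(2)] unfolding B0_def by blast
    moreover have "b \<in> \<B>"
      unfolding \<B>_def using \<open>b \<in> B0\<close> by (intro image_eqI[of _ _ "{b}"]) auto
    ultimately show "\<exists>b\<in>\<B>. p \<in> b \<and> closure b \<subseteq> S" by blast
  qed
  then show ?thesis by (rule that)
qed

lemma sigma_sets_compact_closure_basis:
  assumes \<B>: "compact_closure_basis \<B>" and U: "open U"
  shows "sigma_sets UNIV ({C\<in>\<B>. closure C \<subseteq> U} \<union> {D\<in>sets borel. D \<subseteq> - U}) = sets borel"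
    (is "sigma_sets UNIV ?G = _")
proof
  have "?G \<subseteq> sets borel"
    using compact_closure_basisD(2)[OF \<B>] by auto
  then show "sigma_sets UNIV ?G \<subseteq> sets borel"
    using sets.sigma_sets_subset[of ?G borel] by simp
  have "{S. open S} \<subseteq> sigma_sets UNIV ?G"
  proof
    fix S :: "'a set" assume "S \<in> {S. open S}"
    then have "open S" by simp
    have "\<Union>{b\<in>\<B>. closure b \<subseteq> S \<inter> U} = S \<inter> U"
      using \<open>open S\<close> U by (intro Union_compact_closure_basis[OF \<B>]) auto
    then have S_eq: "S = (S - U) \<union> \<Union>{b\<in>\<B>. closure b \<subseteq> S \<inter> U}"
      by blast
    have "S - U \<in> sigma_sets UNIV ?G"
      using \<open>open S\<close> U by (intro sigma_sets.Basic) auto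
    moreover have "\<Union>{b\<in>\<B>. closure b \<subseteq> S \<inter> U} \<in> sigma_sets UNIV ?G"
      using compact_closure_basisD(1)[OF \<B>]
      by (intro sigma_sets_UNION) (auto intro: sigma_sets.Basic)
    ultimately have "(S - U) \<union> \<Union>{b\<in>\<B>. closure b \<subseteq> S \<inter> U} \<in> sigma_sets UNIV ?G"
      by (rule sigma_sets_Un)
    then show "S \<in> sigma_sets UNIV ?G"
      using S_eq by metis
  qed
  then have "sigma_sets UNIV {S. open S} \<subseteq> sigma_sets UNIV ?G"
    by (rule sigma_sets_mono)
  then show "sets borel \<subseteq> sigma_sets UNIV ?G"
    by (simp only: sets_borel[symmetric])
qed

lemma measure_eqI_compact_closure_basis:
  assumes \<B>: "compact_closure_basis \<B>" and U: "open U"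
    and sets: "sets M = sets borel" "sets N = sets borel"
    and null: "emeasure M (- U) = 0" "emeasure N (- U) = 0"
    and eq: "\<And>C. C \<in> \<B> \<Longrightarrow> closure C \<subseteq> U \<Longrightarrow> emeasure M C = emeasure N C"
    and finite: "\<And>C. C \<in> \<B> \<Longrightarrow> closure C \<subseteq> U \<Longrightarrow> emeasure M C \<noteq> \<infinity>"
  shows "M = N"
proof (rule measure_eqI_generator_eq_countable[where \<Omega>=UNIV and A="{C\<in>\<B>. closure C \<subseteq> U} \<union> {- U}"])
  let ?G = "{C\<in>\<B>. closure C \<subseteq> U} \<union> {D\<in>sets borel. D \<subseteq> - U}"
  have null_subset: "emeasure M D = 0" "emeasure N D = 0" if "D \<in> sets borel" "D \<subseteq> - U" for D
    using emeasure_mono[of D "- U" M] emeasure_mono[of D "- U" N] null sets U that by auto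
  show "Int_stable ?G"
  proof (rule Int_stableI)
    fix C D assume "C \<in> ?G" "D \<in> ?G"
    moreover have "closure (C \<inter> D) \<subseteq> closure C" by (rule closure_mono) simp
    moreover have "C \<in> sets borel" "D \<in> sets borel" if "C \<in> \<B>" "D \<in> \<B>"
      using that compact_closure_basisD(2)[OF \<B>] by auto
    ultimately show "C \<inter> D \<in> ?G"
      using compact_closure_basisD(2,4)[OF \<B>] by auto
  qed
  show "emeasure M X = emeasure N X" if "X \<in> ?G" for X
    using that eq null_subset by auto
  show "sets M = sigma_sets UNIV ?G" "sets N = sigma_sets UNIV ?G"
    using sigma_sets_compact_closure_basis[OF \<B> U] sets by simp_all
  show "{C\<in>\<B>. closure C \<subseteq> U} \<union> {- U} \<subseteq> ?G"
    using U by auto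
  show "\<Union>({C\<in>\<B>. closure C \<subseteq> U} \<union> {- U}) = UNIV"
    using Union_compact_closure_basis[OF \<B> U] by auto
  show "countable ({C\<in>\<B>. closure C \<subseteq> U} \<union> {- U})"
    using compact_closure_basisD(1)[OF \<B>] by simp
  show "emeasure M X \<noteq> \<infinity>" if "X \<in> {C\<in>\<B>. closure C \<subseteq> U} \<union> {- U}" for X
    using that finite null by auto
qed (simp)

section \<open>Haar measure and right translates\<close>

lemma borel_measurable_uminus_group [measurable (raw)]:
  fixes f :: "'a \<Rightarrow> 'g::{topological_group_add, second_countable_topology}"
  shows "f \<in> borel_measurable M \<Longrightarrow> (\<lambda>x. - f x) \<in> borel_measurable M"
  by (rule borel_measurable_continuous_on[where f=uminus]) (intro continuous_intros)

locale left_haar =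
  fixes \<nu> :: "'g::{topological_group_add, t2_space, second_countable_topology} measure"
  assumes locally_compact: "locally_compact_space (euclidean :: 'g topology)"
    and haar: "left_haar_measure \<nu>"
begin

lemma sets_haar [simp, measurable_cong]: "sets \<nu> = sets borel"
  using haar unfolding left_haar_measure_def by blast

lemma space_haar [simp]: "space \<nu> = UNIV"
  using sets_eq_imp_space_eq[OF sets_haar] by simp

lemma emeasure_haar_pos: "open U \<Longrightarrow> U \<noteq> {} \<Longrightarrow> 0 < emeasure \<nu> U"
  using haar unfolding left_haar_measure_def by blast

lemma emeasure_haar_finite:
  assumes "A \<subseteq> K" "compact K"
  shows "emeasure \<nu> A < \<infinity>"
proof -
  have "emeasure \<nu> A \<le> emeasure \<nu> K"
    using assms by (intro emeasure_mono) (simp_all add: borel_closed compact_imp_closed)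
  also have "\<dots> < \<infinity>"
    using haar assms(2) unfolding left_haar_measure_def by blast
  finally show ?thesis .
qed

lemma emeasure_haar_translate:
  assumes "A \<in> sets borel"
  shows "emeasure \<nu> ((\<lambda>y. g + y) -` A) = emeasure \<nu> A"
proof -
  have "(\<lambda>y. g + y) -` A = (\<lambda>y. - g + y) ` A"
  proof (intro set_eqI iffI)
    fix y assume "y \<in> (\<lambda>y. g + y) -` A"
    then show "y \<in> (\<lambda>y. - g + y) ` A"
      by (intro image_eqI[of _ _ "g + y"]) (auto simp: minus_add_cancel)
  qed auto
  then show ?thesis
    using haar assms unfolding left_haar_measure_def by metis
qed

lemma emeasure_haar_uminus_finite:
  assumes "compact (closure C)"
  shows "emeasure \<nu> (uminus -` C) < \<infinity>"
proof (rule emeasure_haar_finite)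
  show "uminus -` C \<subseteq> uminus ` closure C"
  proof
    fix y assume "y \<in> uminus -` C"
    then show "y \<in> uminus ` closure C"
      using closure_subset by (intro image_eqI[of _ _ "- y"]) auto
  qed
  show "compact (uminus ` closure C)"
    using assms by (intro compact_continuous_image continuous_intros)
qed

sublocale sigma_finite_measure \<nu>
proof
  obtain \<B> :: "'g set set" where \<B>: "compact_closure_basis \<B>"
    using ex_compact_closure_basis[OF locally_compact] by blast
  show "\<exists>A. countable A \<and> A \<subseteq> sets \<nu> \<and> \<Union>A = space \<nu> \<and> (\<forall>a\<in>A. emeasure \<nu> a \<noteq> \<infinity>)"
  proof (intro exI conjI ballI)
    show "countable \<B>" "\<B> \<subseteq> sets \<nu>"
      using compact_closure_basisD(1,2)[OF \<B>] by auto
    show "\<Union>\<B> = space \<nu>"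
      using Union_compact_closure_basis[OF \<B> open_UNIV] by auto
    show "emeasure \<nu> b \<noteq> \<infinity>" if "b \<in> \<B>" for b
      using emeasure_haar_finite[OF closure_subset compact_closure_basisD(3)[OF \<B> that]] by simp
  qed
qed

text \<open>This is \<open>\<rho>\<^sub>A(h) = \<nu>(A h\<^sup>-\<^sup>1)\<close>, written additively.\<close>

definition right_translate_measure :: "'g set \<Rightarrow> 'g \<Rightarrow> ennreal" where
  "right_translate_measure A h = emeasure \<nu> {y. y + h \<in> A}"

lemma borel_measurable_right_translate_measure [measurable]:
  assumes [measurable]: "A \<in> sets borel"
  shows "right_translate_measure A \<in> borel_measurable borel"
proof -
  have "{q \<in> space (borel \<Otimes>\<^sub>M \<nu>). snd q + fst q \<in> A} \<in> sets (borel \<Otimes>\<^sub>M \<nu>)"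
    by measurable
  from measurable_emeasure_Pair[OF this] show ?thesis
    unfolding right_translate_measure_def by (simp add: space_pair_measure vimage_def)
qed

lemma right_translate_measure_pos_finite:
  assumes "open A" "A \<noteq> {}" "compact (closure A)"
  shows "0 < right_translate_measure A h" "right_translate_measure A h < \<infinity>"
proof -
  have "open ((\<lambda>y. y + h) -` A)"
    by (intro open_vimage assms(1) continuous_intros)
  then have "open {y. y + h \<in> A}"
    by (simp add: vimage_def)
  moreover obtain a where "a \<in> A" using assms(2) by blast
  then have "a + - h \<in> {y. y + h \<in> A}"
    by (simp add: add.assoc)
  then have "{y. y + h \<in> A} \<noteq> {}"
    by blast
  ultimately show "0 < right_translate_measure A h"
    unfolding right_translate_measure_def by (rule emeasure_haar_pos)
  show "right_translate_measure A h < \<infinity>"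
    unfolding right_translate_measure_def
  proof (rule emeasure_haar_finite)
    show "{y. y + h \<in> A} \<subseteq> (\<lambda>y. y + - h) ` closure A"
    proof
      fix y assume "y \<in> {y. y + h \<in> A}"
      then show "y \<in> (\<lambda>y. y + - h) ` closure A"
        using closure_subset by (intro image_eqI[of _ _ "y + h"]) (auto simp: add.assoc)
    qed
    show "compact ((\<lambda>y. y + - h) ` closure A)"
      using assms(3) by (intro compact_continuous_image continuous_intros)
  qed
qed

text \<open>
  Fubini on \<open>{(p, y). p \<in> D, s p \<in> C, y + s p \<in> A}\<close>. It is applied both to \<open>\<nu>\<close> itself and to
  the invariant measure \<open>m\<close> with \<open>s = snd\<close>; in each case \<open>shift\<close> is where invariance enters.
\<close>

lemma nn_integral_right_translate_measure:
  assumes \<mu>: "sigma_finite_measure \<mu>"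
    and [measurable]: "s \<in> borel_measurable \<mu>" "A \<in> sets borel" "C \<in> sets borel" "D \<in> sets \<mu>"
    and shift: "\<And>y. emeasure \<mu> {p\<in>D. s p \<in> C \<and> y + s p \<in> A} = emeasure \<mu> {p\<in>D. s p \<in> A \<and> - y + s p \<in> C}"
  shows "(\<integral>\<^sup>+p. indicator D p * indicator C (s p) * right_translate_measure A (s p) \<partial>\<mu>) =
    emeasure \<nu> (uminus -` C) * emeasure \<mu> {p\<in>D. s p \<in> A}"
proof -
  interpret \<mu>: sigma_finite_measure \<mu> by (rule \<mu>)
  interpret \<mu>\<nu>: pair_sigma_finite \<mu> \<nu> ..
  have D: "D \<subseteq> space \<mu>" using assms(5) by (rule sets.sets_into_space)
  define E1 where "E1 = {q \<in> space (\<mu> \<Otimes>\<^sub>M \<nu>). fst q \<in> D \<and> s (fst q) \<in> C \<and> snd q + s (fst q) \<in> A}"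
  define E2 where "E2 = {q \<in> space (\<mu> \<Otimes>\<^sub>M \<nu>). fst q \<in> D \<and> s (fst q) \<in> A \<and> - snd q + s (fst q) \<in> C}"
  have E: "E1 \<in> sets (\<mu> \<Otimes>\<^sub>M \<nu>)" "E2 \<in> sets (\<mu> \<Otimes>\<^sub>M \<nu>)"
    unfolding E1_def E2_def by measurable
  have "(\<integral>\<^sup>+p. indicator D p * indicator C (s p) * right_translate_measure A (s p) \<partial>\<mu>) =
      (\<integral>\<^sup>+p. emeasure \<nu> (Pair p -` E1) \<partial>\<mu>)"
    by (intro nn_integral_cong)
      (auto simp: E1_def right_translate_measure_def space_pair_measure indicator_def vimage_def)
  also have "\<dots> = (\<integral>\<^sup>+y. emeasure \<mu> ((\<lambda>p. (p, y)) -` E1) \<partial>\<nu>)"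
    using emeasure_pair_measure_alt[OF E(1)] \<mu>\<nu>.emeasure_pair_measure_alt2[OF E(1)] by simp
  also have "\<dots> = (\<integral>\<^sup>+y. emeasure \<mu> ((\<lambda>p. (p, y)) -` E2) \<partial>\<nu>)"
  proof (intro nn_integral_cong)
    fix y
    have "(\<lambda>p. (p, y)) -` E1 = {p\<in>D. s p \<in> C \<and> y + s p \<in> A}"
      "(\<lambda>p. (p, y)) -` E2 = {p\<in>D. s p \<in> A \<and> - y + s p \<in> C}"
      using D by (auto simp: E1_def E2_def space_pair_measure)
    then show "emeasure \<mu> ((\<lambda>p. (p, y)) -` E1) = emeasure \<mu> ((\<lambda>p. (p, y)) -` E2)"
      using shift by simp
  qed
  also have "\<dots> = (\<integral>\<^sup>+p. emeasure \<nu> (Pair p -` E2) \<partial>\<mu>)"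
    using emeasure_pair_measure_alt[OF E(2)] \<mu>\<nu>.emeasure_pair_measure_alt2[OF E(2)] by simp
  also have "\<dots> = (\<integral>\<^sup>+p. emeasure \<nu> (uminus -` C) * indicator {p\<in>D. s p \<in> A} p \<partial>\<mu>)"
  proof (intro nn_integral_cong)
    fix p assume "p \<in> space \<mu>"
    have "{y. - y + s p \<in> C} = (\<lambda>y. - s p + y) -` (uminus -` C)"
      by (auto simp: minus_add)
    moreover have "uminus -` C \<in> sets borel"
      unfolding vimage_def by measurable
    ultimately have "emeasure \<nu> {y. - y + s p \<in> C} = emeasure \<nu> (uminus -` C)"
      by (simp only: emeasure_haar_translate)
    then show "emeasure \<nu> (Pair p -` E2) = emeasure \<nu> (uminus -` C) * indicator {p\<in>D. s p \<in> A} p"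
      using \<open>p \<in> space \<mu>\<close> by (auto simp: E2_def space_pair_measure indicator_def vimage_def)
  qed
  also have "\<dots> = emeasure \<nu> (uminus -` C) * emeasure \<mu> {p\<in>D. s p \<in> A}"
    using D by (intro nn_integral_cmult_indicator) measurable
  finally show ?thesis .
qed

lemma nn_integral_haar_right_translate_measure:
  assumes [measurable]: "A \<in> sets borel" "C \<in> sets borel"
  shows "(\<integral>\<^sup>+h. indicator C h * right_translate_measure A h \<partial>\<nu>) = emeasure \<nu> (uminus -` C) * emeasure \<nu> A"
proof -
  have "emeasure \<nu> {p. p \<in> C \<and> y + p \<in> A} = emeasure \<nu> {p. p \<in> A \<and> - y + p \<in> C}" for y
  proof -
    have "{p. p \<in> C \<and> y + p \<in> A} \<in> sets borel"
      by measurable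
    moreover have "{p. p \<in> A \<and> - y + p \<in> C} = (\<lambda>p. - y + p) -` {p. p \<in> C \<and> y + p \<in> A}"
      by (auto simp: add.assoc[symmetric])
    ultimately show ?thesis
      by (simp only: emeasure_haar_translate)
  qed
  then show ?thesis
    using nn_integral_right_translate_measure[of \<nu> "\<lambda>h. h" A C UNIV]
    by (simp add: sigma_finite_measure_axioms)
qed

context
  fixes \<B> :: "'g set set" and U :: "'g set" and \<mu> :: "'g measure"
  assumes \<B>: "compact_closure_basis \<B>" and U: "open U" "U \<noteq> {}"
    and sets_\<mu>: "sets \<mu> = sets (restrict_space borel U)"
    and prob_\<mu>: "prob_space \<mu>"
    and shift_identity: "\<And>A C. A \<in> \<B> \<Longrightarrow> C \<in> \<B> \<Longrightarrow> closure A \<subseteq> U \<Longrightarrow> closure C \<subseteq> U \<Longrightarrow>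
      (\<integral>\<^sup>+h. indicator C h * right_translate_measure A h \<partial>\<mu>) = emeasure \<nu> (uminus -` C) * emeasure \<mu> A"
begin

lemma sets_\<mu>_iff: "S \<in> sets \<mu> \<longleftrightarrow> S \<subseteq> U \<and> S \<in> sets borel"
  using U unfolding sets_\<mu> by (simp add: sets_restrict_space_iff)

lemma space_\<mu>: "space \<mu> = U"
  using sets_eq_imp_space_eq[OF sets_\<mu>] U by simp

lemma density_right_translate_measure_eq:
  assumes A: "A \<in> \<B>" "closure A \<subseteq> U" "A \<noteq> {}"
  defines "\<rho> \<equiv> right_translate_measure A"
  shows "density (distr \<mu> borel (\<lambda>h. h)) (\<lambda>h. \<rho> h * indicator U h) =
    density \<nu> (\<lambda>h. emeasure \<mu> A / emeasure \<nu> A * \<rho> h * indicator U h)"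
    (is "?M = ?N")
proof (rule measure_eqI_compact_closure_basis[OF \<B> U(1)])
  interpret \<mu>: prob_space \<mu> by (rule prob_\<mu>)
  have [measurable]: "A \<in> sets borel" "U \<in> sets borel"
    using A U compact_closure_basisD(2)[OF \<B>] by auto
  have [measurable]: "\<rho> \<in> borel_measurable borel"
    unfolding \<rho>_def by measurable
  have id_measurable: "(\<lambda>h. h) \<in> measurable \<mu> borel"
    by (simp add: measurable_cong_sets[OF sets_\<mu> refl] measurable_restrict_space1)
  have "0 < emeasure \<nu> A"
    using A compact_closure_basisD(2)[OF \<B>] by (intro emeasure_haar_pos) auto
  moreover have "emeasure \<nu> A < \<infinity>"
    by (rule emeasure_haar_finite[OF closure_subset compact_closure_basisD(3)[OF \<B> A(1)]])
  ultimately have k: "emeasure \<mu> A / emeasure \<nu> A * emeasure \<nu> A = emeasure \<mu> A"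
    by (simp add: ennreal_divide_times)
  show "sets ?M = sets borel" "sets ?N = sets borel"
    by simp_all
  show "emeasure ?M (- U) = 0" "emeasure ?N (- U) = 0"
    by (simp_all add: emeasure_density nn_integral_0_iff_AE indicator_def)
  fix C assume C: "C \<in> \<B>" "closure C \<subseteq> U"
  then have [measurable]: "C \<in> sets borel" and "C \<subseteq> U"
    using compact_closure_basisD(2)[OF \<B>] closure_subset by auto
  have "emeasure ?M C = (\<integral>\<^sup>+h. indicator C h * \<rho> h \<partial>\<mu>)"
    using \<open>C \<subseteq> U\<close>
    by (simp add: emeasure_density nn_integral_distr[OF id_measurable])
      (intro nn_integral_cong; auto simp: indicator_def)
  also have "\<dots> = emeasure \<nu> (uminus -` C) * emeasure \<mu> A"
    unfolding \<rho>_def by (rule shift_identity[OF A(1) C(1) A(2) C(2)])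
  finally have M_C: "emeasure ?M C = emeasure \<nu> (uminus -` C) * emeasure \<mu> A" .
  have "emeasure ?N C = emeasure \<mu> A / emeasure \<nu> A * (\<integral>\<^sup>+h. indicator C h * \<rho> h \<partial>\<nu>)"
    using \<open>C \<subseteq> U\<close>
    by (simp add: emeasure_density nn_integral_cmult[symmetric])
      (intro nn_integral_cong; auto simp: indicator_def)
  also have "\<dots> = emeasure \<nu> (uminus -` C) * emeasure \<mu> A"
    unfolding \<rho>_def nn_integral_haar_right_translate_measure[OF \<open>A \<in> sets borel\<close> \<open>C \<in> sets borel\<close>]
    using k by (metis mult.assoc mult.commute)
  finally show "emeasure ?M C = emeasure ?N C"
    using M_C by simp
  have "emeasure \<nu> (uminus -` C) < \<infinity>"
    using compact_closure_basisD(3)[OF \<B> C(1)] by (rule emeasure_haar_uminus_finite)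
  then show "emeasure ?M C \<noteq> \<infinity>"
    unfolding M_C by (simp add: ennreal_mult_eq_top_iff)
qed

lemma emeasure_eq_proportional_haar:
  assumes A: "A \<in> \<B>" "closure A \<subseteq> U" "A \<noteq> {}" and S: "S \<in> sets \<mu>"
  shows "emeasure \<mu> S = emeasure \<mu> A / emeasure \<nu> A * emeasure \<nu> S"
proof -
  define \<rho> where "\<rho> = right_translate_measure A"
  define k where "k = emeasure \<mu> A / emeasure \<nu> A"
  have [measurable]: "A \<in> sets borel" "U \<in> sets borel" "S \<in> sets borel" "\<rho> \<in> borel_measurable borel"
    using A U S compact_closure_basisD(2)[OF \<B>] unfolding sets_\<mu>_iff \<rho>_def by auto
  have "S \<subseteq> U" using S unfolding sets_\<mu>_iff by simp
  have id_measurable: "(\<lambda>h. h) \<in> measurable \<mu> borel"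
    by (simp add: measurable_cong_sets[OF sets_\<mu> refl] measurable_restrict_space1)
  have cancel: "\<rho> h * (x / \<rho> h) = x" for h x
    using right_translate_measure_pos_finite[of A h] A compact_closure_basisD(2,3)[OF \<B>]
    unfolding \<rho>_def by (simp add: ennreal_times_divide mult.commute mult_divide_eq_ennreal)
  have "emeasure \<mu> S = (\<integral>\<^sup>+h. indicator S h \<partial>\<mu>)"
    using S by simp
  also have "\<dots> = (\<integral>\<^sup>+h. \<rho> h * indicator U h * (indicator S h / \<rho> h) \<partial>\<mu>)"
  proof (rule nn_integral_cong)
    fix h assume "h \<in> space \<mu>"
    then have "indicator U h = (1::ennreal)" using space_\<mu> by simp
    then show "indicator S h = \<rho> h * indicator U h * (indicator S h / \<rho> h)"
      using cancel[of h "indicator S h"] by simp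
  qed
  also have "\<dots> = (\<integral>\<^sup>+h. \<rho> h * indicator U h * (indicator S h / \<rho> h) \<partial>distr \<mu> borel (\<lambda>h. h))"
    by (simp add: nn_integral_distr[OF id_measurable])
  also have "\<dots> = (\<integral>\<^sup>+h. indicator S h / \<rho> h \<partial>density (distr \<mu> borel (\<lambda>h. h)) (\<lambda>h. \<rho> h * indicator U h))"
    by (simp add: nn_integral_density)
  also have "\<dots> = (\<integral>\<^sup>+h. indicator S h / \<rho> h \<partial>density \<nu> (\<lambda>h. k * \<rho> h * indicator U h))"
    unfolding \<rho>_def k_def density_right_translate_measure_eq[OF A] ..
  also have "\<dots> = (\<integral>\<^sup>+h. k * \<rho> h * indicator U h * (indicator S h / \<rho> h) \<partial>\<nu>)"
    by (simp add: nn_integral_density)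
  also have "\<dots> = (\<integral>\<^sup>+h. k * indicator S h \<partial>\<nu>)"
  proof (rule nn_integral_cong)
    fix h
    have "indicator S h = indicator U h * (indicator S h :: ennreal)"
      using \<open>S \<subseteq> U\<close> by (auto simp: indicator_def)
    then show "k * \<rho> h * indicator U h * (indicator S h / \<rho> h) = k * indicator S h"
      using cancel[of h "indicator S h"] by (metis mult.assoc mult.commute)
  qed
  also have "\<dots> = k * emeasure \<nu> S"
    by (simp add: nn_integral_cmult_indicator)
  finally show ?thesis unfolding k_def .
qed

lemma eq_normalized_restrict_haar:
  "emeasure \<nu> U < \<infinity> \<and> \<mu> = scale_measure (1 / emeasure \<nu> U) (restrict_space \<nu> U)"
proof -
  interpret \<mu>: prob_space \<mu> by (rule prob_\<mu>)
  obtain A where A: "A \<in> \<B>" "closure A \<subseteq> U" "A \<noteq> {}"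
    using U compact_closure_basisD(5)[OF \<B>] by blast
  define k where "k = emeasure \<mu> A / emeasure \<nu> A"
  have \<mu>_eq: "emeasure \<mu> S = k * emeasure \<nu> S" if "S \<in> sets \<mu>" for S
    unfolding k_def using A that by (rule emeasure_eq_proportional_haar)
  have "U \<in> sets \<mu>"
    using U unfolding sets_\<mu>_iff by auto
  then have kU: "k * emeasure \<nu> U = 1"
    using \<mu>_eq \<mu>.emeasure_space_1 space_\<mu> by simp
  have finite: "emeasure \<nu> U \<noteq> \<infinity>"
  proof
    assume "emeasure \<nu> U = \<infinity>"
    with kU have "k * \<infinity> = 1" by simp
    then show False by (cases "k = 0") (simp_all add: ennreal_mult_top)
  qed
  have "emeasure \<nu> U \<noteq> 0"
    using emeasure_haar_pos[OF U] by simp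
  then have "k = k * emeasure \<nu> U / emeasure \<nu> U"
    using finite by (simp add: mult_divide_eq_ennreal)
  then have k: "k = 1 / emeasure \<nu> U"
    unfolding kU .
  have "\<mu> = scale_measure (1 / emeasure \<nu> U) (restrict_space \<nu> U)"
  proof (rule measure_eqI)
    show "sets \<mu> = sets (scale_measure (1 / emeasure \<nu> U) (restrict_space \<nu> U))"
      using sets_\<mu> sets_restrict_space_cong[OF sets_haar] by simp
    fix S assume "S \<in> sets \<mu>"
    then show "emeasure \<mu> S = emeasure (scale_measure (1 / emeasure \<nu> U) (restrict_space \<nu> U)) S"
      using U \<mu>_eq k unfolding sets_\<mu>_iff by (simp add: emeasure_restrict_space)
  qed
  with finite show ?thesis by (simp add: less_top)
qed

end

end

section \<open>Disintegration of an invariant measure\<close>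

lemma (in sigma_finite_measure) AE_eq_if_set_nn_integral_completion_eq:
  fixes f g :: "'a \<Rightarrow> ennreal"
  assumes f: "f \<in> borel_measurable (completion M)" and g: "g \<in> borel_measurable (completion M)"
    and eq: "\<And>A. A \<in> sets M \<Longrightarrow> (\<integral>\<^sup>+x\<in>A. f x \<partial>completion M) = (\<integral>\<^sup>+x\<in>A. g x \<partial>completion M)"
  shows "AE x in M. f x = g x"
proof -
  obtain f' where f': "f' \<in> borel_measurable M" "AE x in M. f x = f' x"
    using completion_ex_borel_measurable[OF f] by blast
  obtain g' where g': "g' \<in> borel_measurable M" "AE x in M. g x = g' x"
    using completion_ex_borel_measurable[OF g] by blast
  have "AE x in M. f' x = g' x"
  proof (rule density_unique2[OF f'(1) g'(1)])
    fix A assume "A \<in> sets M"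
    have "(\<integral>\<^sup>+x\<in>A. f' x \<partial>M) = (\<integral>\<^sup>+x\<in>A. f x \<partial>M)"
      using f'(2) by (intro nn_integral_cong_AE) auto
    also have "\<dots> = (\<integral>\<^sup>+x\<in>A. g x \<partial>M)"
      using eq[OF \<open>A \<in> sets M\<close>] by (simp add: nn_integral_completion)
    also have "\<dots> = (\<integral>\<^sup>+x\<in>A. g' x \<partial>M)"
      using g'(2) by (intro nn_integral_cong_AE) auto
    finally show "(\<integral>\<^sup>+x\<in>A. f' x \<partial>M) = (\<integral>\<^sup>+x\<in>A. g' x \<partial>M)" .
  qed
  with f'(2) g'(2) show ?thesis
    by eventually_elim simp
qed

locale invariant_disintegration = left_haar \<nu>
  for \<nu> :: "'g::{topological_group_add, t2_space, second_countable_topology} measure" +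
  fixes Z :: "('x::polish_space \<times> 'g) set" and m :: "('x \<times> 'g) measure" and mx :: "'x \<Rightarrow> 'g measure"
  assumes open_Z: "open Z"
    and sets_m: "sets m = sets (restrict_space borel Z)"
    and prob_m: "prob_space m"
    and sets_mx: "\<And>x. x \<in> fst ` Z \<Longrightarrow> sets (mx x) = sets (restrict_space borel (fibre Z x))"
    and prob_mx: "\<And>x. x \<in> fst ` Z \<Longrightarrow> prob_space (mx x)"
    and measurable_disintegration: "\<And>B. B \<in> sets m \<Longrightarrow>
      (\<lambda>x. emeasure (mx x) {h. (x, h) \<in> B}) \<in> borel_measurable (completion (distr m borel fst))"
    and disintegration: "\<And>B. B \<in> sets m \<Longrightarrow>
      emeasure m B = (\<integral>\<^sup>+x. emeasure (mx x) {h. (x, h) \<in> B} \<partial>completion (distr m borel fst))"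
    and invariant: "\<And>W g. W \<in> sets m \<Longrightarrow> act g ` W \<subseteq> Z \<Longrightarrow> emeasure m (act g ` W) = emeasure m W"
begin

abbreviation m1 :: "'x measure" where
  "m1 \<equiv> distr m borel fst"

lemma sets_m_iff: "S \<in> sets m \<longleftrightarrow> S \<subseteq> Z \<and> S \<in> sets borel"
  using open_Z unfolding sets_m by (simp add: sets_restrict_space_iff)

lemma space_m: "space m = Z"
  using sets_eq_imp_space_eq[OF sets_m] open_Z by simp

lemma measurable_m: "f \<in> measurable borel N \<Longrightarrow> f \<in> measurable m N"
  unfolding measurable_cong_sets[OF sets_m refl] by (rule measurable_restrict_space1)

lemma measurable_fst_m [measurable]: "fst \<in> borel_measurable m"
  by (intro measurable_m borel_measurable_continuous_onI continuous_intros)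

lemma measurable_snd_m [measurable]: "snd \<in> borel_measurable m"
  by (intro measurable_m borel_measurable_continuous_onI continuous_intros)

lemma open_fibre: "open (fibre Z x)"
proof -
  have "fibre Z x = Pair x -` Z"
    unfolding fibre_def by auto
  then show ?thesis
    using open_Z by (simp add: open_vimage continuous_intros)
qed

lemma space_mx: "x \<in> fst ` Z \<Longrightarrow> space (mx x) = fibre Z x"
  using sets_eq_imp_space_eq[OF sets_mx] open_fibre by simp

lemma measurable_Pair_mx:
  assumes "x \<in> fst ` Z"
  shows "Pair x \<in> measurable (mx x) m"
proof -
  have "Pair x \<in> measurable (borel :: 'g measure) borel"
    by (intro borel_measurable_continuous_onI continuous_intros)
  then have "Pair x \<in> measurable (restrict_space borel (fibre Z x)) (restrict_space borel Z)"
    by (rule measurable_restrict_space3) (auto simp: fibre_def)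
  then show ?thesis
    unfolding measurable_cong_sets[OF sets_mx[OF assms] sets_m] .
qed

text \<open>The indicator of \<open>Z\<close> makes the fibre integral vanish off \<open>fst ` Z\<close>, where \<open>mx x\<close> is arbitrary.\<close>

definition fibre_integral :: "('x \<times> 'g \<Rightarrow> ennreal) \<Rightarrow> 'x \<Rightarrow> ennreal" where
  "fibre_integral F x = (\<integral>\<^sup>+h. F (x, h) * indicator Z (x, h) \<partial>mx x)"

lemma fibre_integral_eq: "x \<in> fst ` Z \<Longrightarrow> fibre_integral F x = (\<integral>\<^sup>+h. F (x, h) \<partial>mx x)"
  unfolding fibre_integral_def by (intro nn_integral_cong) (simp add: space_mx fibre_def)

lemma fibre_integral_outside:
  assumes "x \<notin> fst ` Z"
  shows "fibre_integral F x = 0"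
proof -
  have "(x, h) \<notin> Z" for h
    using assms by force
  then show ?thesis
    by (simp add: fibre_integral_def)
qed

lemma fibre_integral_indicator:
  assumes "B \<in> sets m"
  shows "fibre_integral (indicator B) x = emeasure (mx x) {h. (x, h) \<in> B}"
proof (cases "x \<in> fst ` Z")
  case True
  have "{h. (x, h) \<in> B} = Pair x -` B \<inter> space (mx x)"
    using assms True by (auto simp: space_mx fibre_def sets_m_iff)
  also have "\<dots> \<in> sets (mx x)"
    using measurable_Pair_mx[OF True] assms by (rule measurable_sets)
  finally show ?thesis
    using True by (simp add: fibre_integral_eq indicator_def flip: nn_integral_indicator)
next
  case False
  then have "{h. (x, h) \<in> B} = {}"
    using assms by (force simp: sets_m_iff)
  then show ?thesis
    using False by (simp add: fibre_integral_outside)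
qed

lemma fibre_integral_mult_fst:
  assumes "u \<in> borel_measurable m"
  shows "fibre_integral (\<lambda>p. c (fst p) * u p) x = c x * fibre_integral u x"
proof (cases "x \<in> fst ` Z")
  case True
  have "(\<lambda>h. u (x, h)) \<in> borel_measurable (mx x)"
    using measurable_comp[OF measurable_Pair_mx[OF True] assms] by (simp add: comp_def)
  then show ?thesis
    using True by (simp add: fibre_integral_eq nn_integral_cmult)
qed (simp add: fibre_integral_outside)

lemma fibre_integral_add:
  assumes "u \<in> borel_measurable m" "v \<in> borel_measurable m"
  shows "fibre_integral (\<lambda>p. u p + v p) x = fibre_integral u x + fibre_integral v x"
proof (cases "x \<in> fst ` Z")
  case True
  have "(\<lambda>h. u (x, h)) \<in> borel_measurable (mx x)" "(\<lambda>h. v (x, h)) \<in> borel_measurable (mx x)"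
    using measurable_comp[OF measurable_Pair_mx[OF True] assms(1)]
      measurable_comp[OF measurable_Pair_mx[OF True] assms(2)] by (simp_all add: comp_def)
  then show ?thesis
    using True by (simp add: fibre_integral_eq nn_integral_add)
qed (simp add: fibre_integral_outside)

lemma fibre_integral_SUP:
  assumes "\<And>i. U i \<in> borel_measurable m" "incseq U"
  shows "fibre_integral (SUP i. U i) x = (SUP i. fibre_integral (U i) x)"
proof (cases "x \<in> fst ` Z")
  case True
  have "\<And>i. (\<lambda>h. U i (x, h)) \<in> borel_measurable (mx x)"
    using measurable_comp[OF measurable_Pair_mx[OF True] assms(1)] by (simp add: comp_def)
  moreover have "incseq (\<lambda>i h. U i (x, h))"
    using assms(2) by (auto simp: incseq_def le_fun_def)
  ultimately show ?thesis
    using True by (simp add: fibre_integral_eq image_comp nn_integral_monotone_convergence_SUP)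
qed (simp add: fibre_integral_outside)

lemma incseq_fibre_integral:
  assumes "incseq U"
  shows "incseq (\<lambda>i. fibre_integral (U i))"
proof (intro monoI le_funI)
  fix i j :: nat and x assume "i \<le> j"
  then show "fibre_integral (U i) x \<le> fibre_integral (U j) x"
    using assms unfolding fibre_integral_def
    by (auto intro!: nn_integral_mono mult_right_mono simp: incseq_def le_fun_def)
qed

lemma nn_integral_disintegration:
  assumes "F \<in> borel_measurable m"
  shows "fibre_integral F \<in> borel_measurable (completion m1) \<and>
    integral\<^sup>N m F = (\<integral>\<^sup>+x. fibre_integral F x \<partial>completion m1)"
  using assms
proof (induction rule: borel_measurable_induct)
  case (cong f g)
  then have "fibre_integral f = fibre_integral g"
    unfolding fibre_integral_def by (auto intro!: nn_integral_cong simp: space_m indicator_def)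
  moreover have "integral\<^sup>N m f = integral\<^sup>N m g"
    using cong by (intro nn_integral_cong) simp
  ultimately show ?case
    using cong by simp
next
  case (set B)
  then show ?case
    using measurable_disintegration disintegration by (simp add: fibre_integral_indicator)
next
  case (mult u c)
  then have [measurable]: "fibre_integral u \<in> borel_measurable (completion m1)"
    by simp
  show ?case
    using mult fibre_integral_mult_fst[of u "\<lambda>_. c"] by (simp add: nn_integral_cmult)
next
  case (add u v)
  then have [measurable]: "fibre_integral u \<in> borel_measurable (completion m1)"
    "fibre_integral v \<in> borel_measurable (completion m1)"
    by simp_all
  show ?case
    using add by (simp add: fibre_integral_add nn_integral_add)
next
  case (seq U)
  then have [measurable]: "\<And>i. fibre_integral (U i) \<in> borel_measurable (completion m1)"
    by simp
  have "integral\<^sup>N m (SUP i. U i) = (\<integral>\<^sup>+p. (SUP i. U i p) \<partial>m)"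
    by (rule arg_cong[where f="integral\<^sup>N m"], rule ext) (simp add: image_comp)
  also have "\<dots> = (SUP i. integral\<^sup>N m (U i))"
    using seq by (intro nn_integral_monotone_convergence_SUP)
  also have "\<dots> = (SUP i. \<integral>\<^sup>+x. fibre_integral (U i) x \<partial>completion m1)"
    using seq by simp
  also have "\<dots> = (\<integral>\<^sup>+x. (SUP i. fibre_integral (U i) x) \<partial>completion m1)"
    using incseq_fibre_integral[OF \<open>incseq U\<close>]
    by (simp add: nn_integral_monotone_convergence_SUP)
  finally have integral: "integral\<^sup>N m (SUP i. U i) =
      (\<integral>\<^sup>+x. (SUP i. fibre_integral (U i) x) \<partial>completion m1)" .
  have SUP_eq: "fibre_integral (SUP i. U i) = (\<lambda>x. SUP i. fibre_integral (U i) x)"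
    using \<open>\<And>i. U i \<in> borel_measurable m\<close> \<open>incseq U\<close> by (intro ext fibre_integral_SUP)
  show ?case
    unfolding SUP_eq
  proof
    show "(\<lambda>x. SUP i. fibre_integral (U i) x) \<in> borel_measurable (completion m1)"
      by measurable
  qed (rule integral)
qed

lemma emeasure_shift_fibrewise:
  assumes [measurable]: "A \<in> sets borel" "C \<in> sets borel" "D \<in> sets borel"
    and fibres: "\<And>x. x \<in> D \<Longrightarrow> A \<subseteq> fibre Z x \<and> C \<subseteq> fibre Z x"
  shows "emeasure m {p\<in>Z \<inter> fst -` D. snd p \<in> C \<and> y + snd p \<in> A} =
    emeasure m {p\<in>Z \<inter> fst -` D. snd p \<in> A \<and> - y + snd p \<in> C}"
proof -
  define W where "W = {p\<in>Z \<inter> fst -` D. snd p \<in> C \<and> y + snd p \<in> A}"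
  have W_eq: "W = {p\<in>space m. fst p \<in> D \<and> snd p \<in> C \<and> y + snd p \<in> A}"
    unfolding W_def space_m by blast
  have "W \<in> sets m"
    unfolding W_eq by measurable
  have act_eq: "act y ` W = {p\<in>Z \<inter> fst -` D. snd p \<in> A \<and> - y + snd p \<in> C}"
  proof (intro set_eqI iffI)
    fix q assume "q \<in> act y ` W"
    then show "q \<in> {p\<in>Z \<inter> fst -` D. snd p \<in> A \<and> - y + snd p \<in> C}"
      using fibres unfolding W_def act_def fibre_def by (auto simp: minus_add_cancel)
  next
    fix q assume q: "q \<in> {p\<in>Z \<inter> fst -` D. snd p \<in> A \<and> - y + snd p \<in> C}"
    then have "(fst q, - y + snd q) \<in> W"
      using fibres unfolding W_def fibre_def by (auto simp: add_minus_cancel)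
    moreover have "q = act y (fst q, - y + snd q)"
      by (simp add: act_def add_minus_cancel)
    ultimately show "q \<in> act y ` W"
      by blast
  qed
  have "act y ` W \<subseteq> Z"
    unfolding act_eq by blast
  from invariant[OF \<open>W \<in> sets m\<close> this]
  have "emeasure m {p\<in>Z \<inter> fst -` D. snd p \<in> A \<and> - y + snd p \<in> C} = emeasure m W"
    by (simp only: act_eq)
  then show ?thesis
    unfolding W_def by simp
qed

lemma nn_integral_right_translate_measure_fibrewise:
  assumes [measurable]: "A \<in> sets borel" "C \<in> sets borel" "D \<in> sets borel"
    and fibres: "\<And>x. x \<in> D \<Longrightarrow> A \<subseteq> fibre Z x \<and> C \<subseteq> fibre Z x"
  shows "(\<integral>\<^sup>+p. indicator D (fst p) * indicator C (snd p) * right_translate_measure A (snd p) \<partial>m) =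
    emeasure \<nu> (uminus -` C) * emeasure m {p\<in>Z. fst p \<in> D \<and> snd p \<in> A}"
proof -
  interpret m: prob_space m by (rule prob_m)
  have D_eq: "Z \<inter> fst -` D = {p\<in>space m. fst p \<in> D}"
    unfolding space_m by blast
  have [measurable]: "Z \<inter> fst -` D \<in> sets m"
    unfolding D_eq by measurable
  from nn_integral_right_translate_measure[OF m.sigma_finite_measure_axioms _ _ _ \<open>Z \<inter> fst -` D \<in> sets m\<close>]
  have "(\<integral>\<^sup>+p. indicator (Z \<inter> fst -` D) p * indicator C (snd p) * right_translate_measure A (snd p) \<partial>m) =
    emeasure \<nu> (uminus -` C) * emeasure m {p\<in>Z \<inter> fst -` D. snd p \<in> A}"
    using emeasure_shift_fibrewise[OF assms] by simp
  moreover have "{p\<in>Z \<inter> fst -` D. snd p \<in> A} = {p\<in>Z. fst p \<in> D \<and> snd p \<in> A}"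
    by auto
  moreover have "(\<integral>\<^sup>+p. indicator (Z \<inter> fst -` D) p * indicator C (snd p) * right_translate_measure A (snd p) \<partial>m) =
    (\<integral>\<^sup>+p. indicator D (fst p) * indicator C (snd p) * right_translate_measure A (snd p) \<partial>m)"
    by (intro nn_integral_cong) (simp add: space_m indicator_def)
  ultimately show ?thesis
    by simp
qed

lemma open_fibre_superset:
  assumes "compact K"
  shows "open {x. K \<subseteq> fibre Z x}"
proof (rule Topological_Spaces.openI)
  fix x assume "x \<in> {x. K \<subseteq> fibre Z x}"
  then have "{x} \<times> K \<subseteq> Z"
    by (auto simp: fibre_def)
  then obtain X where "x \<in> X" "open X" "X \<times> K \<subseteq> Z"
    using Elementary_Topology.tube_lemma[OF assms open_Z] by blast
  then show "\<exists>T. open T \<and> x \<in> T \<and> T \<subseteq> {x. K \<subseteq> fibre Z x}"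
    by (auto simp: fibre_def)
qed

lemma nn_integral_fibre_identity:
  assumes [measurable]: "A \<in> sets borel" "C \<in> sets borel" "D \<in> sets borel"
    and fibres: "\<And>x. x \<in> D \<Longrightarrow> A \<subseteq> fibre Z x \<and> C \<subseteq> fibre Z x"
  shows "(\<integral>\<^sup>+x. indicator D x * fibre_integral (\<lambda>p. indicator C (snd p) * right_translate_measure A (snd p)) x
      \<partial>completion m1) =
    (\<integral>\<^sup>+x. indicator D x * (emeasure \<nu> (uminus -` C) * emeasure (mx x) {h. (x, h) \<in> Z \<and> h \<in> A})
      \<partial>completion m1)"
proof -
  define F :: "'x \<times> 'g \<Rightarrow> ennreal" where "F p = indicator C (snd p) * right_translate_measure A (snd p)" for p
  define B where "B = {p\<in>Z. fst p \<in> D \<and> snd p \<in> A}"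
  have [measurable]: "F \<in> borel_measurable m"
    unfolding F_def by measurable
  have B_eq: "B = {p\<in>space m. fst p \<in> D \<and> snd p \<in> A}"
    unfolding B_def space_m ..
  have "B \<in> sets m"
    unfolding B_eq by measurable
  have "(\<integral>\<^sup>+x. indicator D x * fibre_integral F x \<partial>completion m1) =
      (\<integral>\<^sup>+x. fibre_integral (\<lambda>p. indicator D (fst p) * F p) x \<partial>completion m1)"
    by (simp add: fibre_integral_mult_fst)
  also have "\<dots> = (\<integral>\<^sup>+p. indicator D (fst p) * F p \<partial>m)"
    using nn_integral_disintegration[of "\<lambda>p. indicator D (fst p) * F p"] by simp
  also have "\<dots> = emeasure \<nu> (uminus -` C) * emeasure m B"
    using nn_integral_right_translate_measure_fibrewise[OF assms] unfolding F_def B_def by (simp add: mult.assoc)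
  also have "\<dots> = emeasure \<nu> (uminus -` C) * (\<integral>\<^sup>+x. emeasure (mx x) {h. (x, h) \<in> B} \<partial>completion m1)"
    using disintegration[OF \<open>B \<in> sets m\<close>] by simp
  also have "\<dots> = (\<integral>\<^sup>+x. emeasure \<nu> (uminus -` C) * emeasure (mx x) {h. (x, h) \<in> B} \<partial>completion m1)"
    using measurable_disintegration[OF \<open>B \<in> sets m\<close>] by (simp add: nn_integral_cmult)
  also have "\<dots> = (\<integral>\<^sup>+x. indicator D x * (emeasure \<nu> (uminus -` C) * emeasure (mx x) {h. (x, h) \<in> Z \<and> h \<in> A})
      \<partial>completion m1)"
    by (intro nn_integral_cong) (simp add: B_def indicator_def)
  finally show ?thesis
    unfolding F_def .
qed

lemma AE_fibre_integral_eq: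
  assumes [measurable]: "A \<in> sets borel" "C \<in> sets borel" "Q \<in> sets borel"
    and fibres: "\<And>x. x \<in> Q \<Longrightarrow> A \<subseteq> fibre Z x \<and> C \<subseteq> fibre Z x"
  shows "AE x in m1. x \<in> Q \<longrightarrow>
    fibre_integral (\<lambda>p. indicator C (snd p) * right_translate_measure A (snd p)) x =
      emeasure \<nu> (uminus -` C) * emeasure (mx x) {h. (x, h) \<in> Z \<and> h \<in> A}"
proof -
  interpret m1: prob_space m1
    using prob_m by (rule prob_space.prob_space_distr) measurable
  define F :: "'x \<times> 'g \<Rightarrow> ennreal" where "F p = indicator C (snd p) * right_translate_measure A (snd p)" for p
  define G where "G x = emeasure \<nu> (uminus -` C) * emeasure (mx x) {h. (x, h) \<in> Z \<and> h \<in> A}" for x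
  have [measurable]: "Q \<in> sets (completion m1)"
    by simp
  have "F \<in> borel_measurable m"
    unfolding F_def by measurable
  then have [measurable]: "fibre_integral F \<in> borel_measurable (completion m1)"
    using nn_integral_disintegration by blast
  have "{p\<in>space m. snd p \<in> A} \<in> sets m"
    by measurable
  from measurable_disintegration[OF this]
  have [measurable]: "G \<in> borel_measurable (completion m1)"
    unfolding G_def by (simp add: space_m)
  have "AE x in m1. indicator Q x * fibre_integral F x = indicator Q x * G x"
  proof (rule m1.AE_eq_if_set_nn_integral_completion_eq)
    show "(\<lambda>x. indicator Q x * fibre_integral F x) \<in> borel_measurable (completion m1)"
      "(\<lambda>x. indicator Q x * G x) \<in> borel_measurable (completion m1)"
      by measurable
    fix D assume "D \<in> sets m1"
    then have [measurable]: "D \<inter> Q \<in> sets borel"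
      by simp
    have "(\<integral>\<^sup>+x\<in>D. indicator Q x * fibre_integral F x \<partial>completion m1) =
        (\<integral>\<^sup>+x. indicator (D \<inter> Q) x * fibre_integral F x \<partial>completion m1)"
      by (intro nn_integral_cong) (auto simp: indicator_def)
    also have "\<dots> = (\<integral>\<^sup>+x. indicator (D \<inter> Q) x * G x \<partial>completion m1)"
      unfolding F_def G_def using fibres by (intro nn_integral_fibre_identity) simp_all
    also have "\<dots> = (\<integral>\<^sup>+x\<in>D. indicator Q x * G x \<partial>completion m1)"
      by (intro nn_integral_cong) (auto simp: indicator_def)
    finally show "(\<integral>\<^sup>+x\<in>D. indicator Q x * fibre_integral F x \<partial>completion m1) =
        (\<integral>\<^sup>+x\<in>D. indicator Q x * G x \<partial>completion m1)" .
  qed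
  then show ?thesis
    by eventually_elim (auto simp: F_def[abs_def] G_def)
qed

lemma AE_fibre_identity:
  assumes [measurable]: "A \<in> sets borel" "C \<in> sets borel"
    and compact: "compact (closure A)" "compact (closure C)"
  shows "AE x in m1. x \<in> fst ` Z \<longrightarrow> closure A \<union> closure C \<subseteq> fibre Z x \<longrightarrow>
    (\<integral>\<^sup>+h. indicator C h * right_translate_measure A h \<partial>mx x) = emeasure \<nu> (uminus -` C) * emeasure (mx x) A"
proof -
  define Q where "Q = {x. closure A \<union> closure C \<subseteq> fibre Z x}"
  have "open Q"
    unfolding Q_def using compact by (intro open_fibre_superset compact_Un)
  moreover have "A \<subseteq> fibre Z x \<and> C \<subseteq> fibre Z x" if "x \<in> Q" for x
    using that closure_subset[of A] closure_subset[of C] unfolding Q_def by blast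
  ultimately have "AE x in m1. x \<in> Q \<longrightarrow>
    fibre_integral (\<lambda>p. indicator C (snd p) * right_translate_measure A (snd p)) x =
      emeasure \<nu> (uminus -` C) * emeasure (mx x) {h. (x, h) \<in> Z \<and> h \<in> A}"
    by (intro AE_fibre_integral_eq) auto
  then show ?thesis
  proof eventually_elim
    case (elim x)
    show ?case
    proof (intro impI)
      assume x: "x \<in> fst ` Z" "closure A \<union> closure C \<subseteq> fibre Z x"
      then have "{h. (x, h) \<in> Z \<and> h \<in> A} = A"
        using closure_subset[of A] by (auto simp: fibre_def)
      with elim x show "(\<integral>\<^sup>+h. indicator C h * right_translate_measure A h \<partial>mx x) =
          emeasure \<nu> (uminus -` C) * emeasure (mx x) A"
        by (simp add: Q_def fibre_integral_eq)
    qed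
  qed
qed

lemma AE_eq_normalized_restrict_haar:
  "AE x in m1. emeasure \<nu> (fibre Z x) < \<infinity> \<and>
    mx x = scale_measure (1 / emeasure \<nu> (fibre Z x)) (restrict_space \<nu> (fibre Z x))"
proof -
  obtain \<B> :: "'g set set" where \<B>: "compact_closure_basis \<B>"
    using ex_compact_closure_basis[OF locally_compact] by blast
  have "AE x in m1. \<forall>A\<in>\<B>. \<forall>C\<in>\<B>. x \<in> fst ` Z \<longrightarrow> closure A \<union> closure C \<subseteq> fibre Z x \<longrightarrow>
      (\<integral>\<^sup>+h. indicator C h * right_translate_measure A h \<partial>mx x) = emeasure \<nu> (uminus -` C) * emeasure (mx x) A"
    using compact_closure_basisD[OF \<B>]
    by (intro AE_ball_countable' AE_fibre_identity) auto
  moreover have "AE x in m1. x \<in> fst ` Z"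
  proof -
    have "AE p in m. fst p \<in> fst ` Z"
      by (rule AE_I2) (simp add: space_m)
    moreover have "{x \<in> space borel. x \<in> fst ` Z} \<in> sets borel"
      using open_image_fst[OF open_Z] by simp
    ultimately show ?thesis
      by (simp add: AE_distr_iff)
  qed
  ultimately show ?thesis
  proof eventually_elim
    case (elim x)
    then have x: "x \<in> fst ` Z" by simp
    then have "fibre Z x \<noteq> {}"
      by (force simp: fibre_def)
    from eq_normalized_restrict_haar[OF \<B> open_fibre this sets_mx[OF x] prob_mx[OF x]] show ?case
      using elim x by blast
  qed
qed

end

theorem proposition2p6:
  fixes \<nu> :: "'g::{topological_group_add, t2_space, second_countable_topology} measure"
    and Z :: "('x::polish_space \<times> 'g) set"
    and m :: "('x \<times> 'g) measure"
    and mx :: "'x \<Rightarrow> 'g measure"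
  assumes lie: "locally_euclidean_group TYPE('g)"
    and haar: "left_haar_measure \<nu>"
    and Z_open: "open Z" and Z_ne: "Z \<noteq> {}"
    and m_sets: "sets m = sets (restrict_space borel Z)"
    and m_prob: "prob_space m"
    and mx_sets: "\<And>x. x \<in> fst ` Z \<Longrightarrow> sets (mx x) = sets (restrict_space borel (fibre Z x))"
    and mx_prob: "\<And>x. x \<in> fst ` Z \<Longrightarrow> prob_space (mx x)"
    and disint_meas: "\<And>B. B \<in> sets m \<Longrightarrow>
          (\<lambda>x. emeasure (mx x) {h. (x, h) \<in> B}) \<in> borel_measurable (completion (distr m borel fst))"
    and disint: "\<And>B. B \<in> sets m \<Longrightarrow>
          emeasure m B = (\<integral>\<^sup>+ x. emeasure (mx x) {h. (x, h) \<in> B} \<partial>completion (distr m borel fst))"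
    and invariant: "\<And>W g. W \<in> sets m \<Longrightarrow> act g ` W \<subseteq> Z \<Longrightarrow> emeasure m (act g ` W) = emeasure m W"
  shows "AE x in distr m borel fst.
           emeasure \<nu> (fibre Z x) < \<infinity> \<and>
           mx x = scale_measure (1 / emeasure \<nu> (fibre Z x)) (restrict_space \<nu> (fibre Z x))"
proof -
  interpret invariant_disintegration \<nu> Z m mx
    by (intro invariant_disintegration.intro left_haar.intro invariant_disintegration_axioms.intro
        locally_compact_space_if_locally_euclidean_group lie haar Z_open m_sets m_prob mx_sets mx_prob
        disint_meas disint invariant)
  show ?thesis
    by (rule AE_eq_normalized_restrict_haar)
qed

end
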